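(* Let $\alpha\colon\mathcal H'\to\mathcal H$ be a morphism of graded connected Hopf algebras over a field $\Bbbk$. Let $\varphi,\psi$ be characters of $\mathcal H$ and put $\varphi'=\varphi\circ\alpha$, $\psi'=\psi\circ\alpha$. Then: (a) $\alpha\bigl(S(\varphi',\psi')\bigr)\subseteq S(\varphi,\psi)$; (b) $I(\varphi',\psi')$ is the ideal of $(\mathcal H')^*$ generated by $\alpha^*\bigl(I(\varphi,\psi)\bigr)$. Moreover, if $\alpha$ is injective then $S(\varphi',\psi')=\alpha^{-1}\bigl(S(\varphi,\psi)\bigr)$ and $I(\varphi',\psi')=\alpha^*\bigl(I(\varphi,\psi)\bigr)$.
   Context: Graded connected Hopf algebras have finite-dimensional homogeneous components; $\mathcal H^*=\bigoplus_n(\mathcal H_n)^*$ is the graded dual and $\alpha^*\colon\mathcal H^*\to(\mathcal H')^*$ the dual map. Characters are algebra morphisms to $\Bbbk$; for a linear functional $\varphi$, $\varphi_n=\varphi|_{\mathcal H_n}$. $S(\varphi,\psi)$ is the largest graded subcoalgebra of $\mathcal H$ on which $\varphi=\psi$; $I(\varphi,\psi)$ is the ideal of $\mathcal H^*$ generated by $\varphi_n-\psi_n$, $n\ge0$ (similarly for $\mathcal H'$). *)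

theory Defs
  imports Complex_Main
begin

text \<open>An element of H \<otimes> H is represented by a finite list of pairs (a,b), standing
  for the sum of the a \<otimes> b; similarly for triples and H \<otimes> H \<otimes> H.\<close>

record ('k, 'h) ghopf =
  scl  :: "'k \<Rightarrow> 'h \<Rightarrow> 'h"
  mul  :: "'h \<Rightarrow> 'h \<Rightarrow> 'h"
  one  :: "'h"
  cop  :: "'h \<Rightarrow> ('h \<times> 'h) list"
  cou  :: "'h \<Rightarrow> 'k"
  grd  :: "nat \<Rightarrow> 'h set"

definition lin_fun :: "('k::field, 'h::ab_group_add) ghopf \<Rightarrow> ('h \<Rightarrow> 'k) \<Rightarrow> bool" where
  "lin_fun H f \<longleftrightarrow> Vector_Spaces.linear (scl H) ((*)) f"

text \<open>Equality of elements of H \<otimes> H (resp. H \<otimes> H \<otimes> H) given by representatives: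
  over a field, elementary tensors of linear functionals separate points.\<close>
definition tens2_eq :: "('k::field, 'h::ab_group_add) ghopf \<Rightarrow> ('h \<times> 'h) list \<Rightarrow> ('h \<times> 'h) list \<Rightarrow> bool" where
  "tens2_eq H ts us \<longleftrightarrow> (\<forall>f g. lin_fun H f \<longrightarrow> lin_fun H g \<longrightarrow>
      (\<Sum>(a,b)\<leftarrow>ts. f a * g b) = (\<Sum>(a,b)\<leftarrow>us. f a * g b))"

definition tens3_eq :: "('k::field, 'h::ab_group_add) ghopf \<Rightarrow> ('h \<times> 'h \<times> 'h) list \<Rightarrow> ('h \<times> 'h \<times> 'h) list \<Rightarrow> bool" where
  "tens3_eq H ts us \<longleftrightarrow> (\<forall>f g h. lin_fun H f \<longrightarrow> lin_fun H g \<longrightarrow> lin_fun H h \<longrightarrow>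
      (\<Sum>(a,b,c)\<leftarrow>ts. f a * g b * h c) = (\<Sum>(a,b,c)\<leftarrow>us. f a * g b * h c))"

definition is_decomp :: "('k, 'h::ab_group_add) ghopf \<Rightarrow> 'h \<Rightarrow> (nat \<Rightarrow> 'h) \<Rightarrow> bool" where
  "is_decomp H x c \<longleftrightarrow> (\<forall>m. c m \<in> grd H m) \<and> finite {m. c m \<noteq> 0} \<and> x = (\<Sum>m\<in>{m. c m \<noteq> 0}. c m)"

definition proj :: "('k, 'h::ab_group_add) ghopf \<Rightarrow> nat \<Rightarrow> 'h \<Rightarrow> 'h" where
  "proj H n x = (THE c. is_decomp H x c) n"

definition graded_connected_hopf :: "('k::field, 'h::ab_group_add) ghopf \<Rightarrow> bool" where
  "graded_connected_hopf H \<longleftrightarrow>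
     \<comment> \<open>vector space, graded with finite-dimensional components\<close>
     vector_space (scl H) \<and>
     (\<forall>n. module.subspace (scl H) (grd H n)) \<and>
     (\<forall>n. \<exists>B. finite B \<and> B \<subseteq> grd H n \<and> grd H n \<subseteq> module.span (scl H) B) \<and>
     (\<forall>x. \<exists>!c. is_decomp H x c) \<and>
     \<comment> \<open>graded associative unital algebra\<close>
     (\<forall>x. Vector_Spaces.linear (scl H) (scl H) (mul H x)) \<and>
     (\<forall>y. Vector_Spaces.linear (scl H) (scl H) (\<lambda>x. mul H x y)) \<and>
     (\<forall>x y z. mul H (mul H x y) z = mul H x (mul H y z)) \<and>
     (\<forall>x. mul H (one H) x = x \<and> mul H x (one H) = x) \<and>
     one H \<in> grd H 0 \<and>
     (\<forall>i j x y. x \<in> grd H i \<longrightarrow> y \<in> grd H j \<longrightarrow> mul H x y \<in> grd H (i + j)) \<and>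
     \<comment> \<open>connected\<close>
     grd H 0 = module.span (scl H) {one H} \<and>
     \<comment> \<open>coassociative counital graded coalgebra\<close>
     (\<forall>c x y. tens2_eq H (cop H (scl H c x + y)) (map (\<lambda>(a,b). (scl H c a, b)) (cop H x) @ cop H y)) \<and>
     lin_fun H (cou H) \<and>
     (\<forall>x. tens3_eq H [(a1, a2, b). (a, b) \<leftarrow> cop H x, (a1, a2) \<leftarrow> cop H a]
                      [(a, b1, b2). (a, b) \<leftarrow> cop H x, (b1, b2) \<leftarrow> cop H b]) \<and>
     (\<forall>x. (\<Sum>(a,b)\<leftarrow>cop H x. scl H (cou H a) b) = x \<and> (\<Sum>(a,b)\<leftarrow>cop H x. scl H (cou H b) a) = x) \<and>
     (\<forall>n x. x \<in> grd H n \<longrightarrow> (\<exists>ts. tens2_eq H (cop H x) ts \<and>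
            (\<forall>(a,b)\<in>set ts. \<exists>i j. i + j = n \<and> a \<in> grd H i \<and> b \<in> grd H j))) \<and>
     (\<forall>n x. 0 < n \<longrightarrow> x \<in> grd H n \<longrightarrow> cou H x = 0) \<and>
     \<comment> \<open>bialgebra compatibility\<close>
     (\<forall>x y. tens2_eq H (cop H (mul H x y))
                 [(mul H a a', mul H b b'). (a, b) \<leftarrow> cop H x, (a', b') \<leftarrow> cop H y]) \<and>
     tens2_eq H (cop H (one H)) [(one H, one H)] \<and>
     (\<forall>x y. cou H (mul H x y) = cou H x * cou H y) \<and>
     cou H (one H) = 1 \<and>
     \<comment> \<open>antipode\<close>
     (\<exists>S. Vector_Spaces.linear (scl H) (scl H) S \<and>
          (\<forall>x. (\<Sum>(a,b)\<leftarrow>cop H x. mul H (S a) b) = scl H (cou H x) (one H) \<and>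
               (\<Sum>(a,b)\<leftarrow>cop H x. mul H a (S b)) = scl H (cou H x) (one H)))"

definition hopf_morphism :: "('k::field, 'a::ab_group_add) ghopf \<Rightarrow> ('k, 'b::ab_group_add) ghopf \<Rightarrow> ('a \<Rightarrow> 'b) \<Rightarrow> bool" where
  "hopf_morphism H' H \<alpha> \<longleftrightarrow>
     Vector_Spaces.linear (scl H') (scl H) \<alpha> \<and>
     (\<forall>n x. x \<in> grd H' n \<longrightarrow> \<alpha> x \<in> grd H n) \<and>
     (\<forall>x y. \<alpha> (mul H' x y) = mul H (\<alpha> x) (\<alpha> y)) \<and>
     \<alpha> (one H') = one H \<and>
     (\<forall>x. tens2_eq H (map (\<lambda>(a,b). (\<alpha> a, \<alpha> b)) (cop H' x)) (cop H (\<alpha> x))) \<and>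
     (\<forall>x. cou H (\<alpha> x) = cou H' x)"

definition character :: "('k::field, 'h::ab_group_add) ghopf \<Rightarrow> ('h \<Rightarrow> 'k) \<Rightarrow> bool" where
  "character H \<phi> \<longleftrightarrow> lin_fun H \<phi> \<and> (\<forall>x y. \<phi> (mul H x y) = \<phi> x * \<phi> y) \<and> \<phi> (one H) = 1"

definition graded_subcoalgebra :: "('k::field, 'h::ab_group_add) ghopf \<Rightarrow> 'h set \<Rightarrow> bool" where
  "graded_subcoalgebra H C \<longleftrightarrow>
     module.subspace (scl H) C \<and>
     (\<forall>x\<in>C. \<forall>n. proj H n x \<in> C) \<and>
     (\<forall>x\<in>C. \<exists>ts. tens2_eq H (cop H x) ts \<and> set ts \<subseteq> C \<times> C)"

definition S_coalg :: "('k::field, 'h::ab_group_add) ghopf \<Rightarrow> ('h \<Rightarrow> 'k) \<Rightarrow> ('h \<Rightarrow> 'k) \<Rightarrow> 'h set" where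
  "S_coalg H \<phi> \<psi> = (GREATEST C. graded_subcoalgebra H C \<and> (\<forall>x\<in>C. \<phi> x = \<psi> x))"

definition gdual :: "('k::field, 'h::ab_group_add) ghopf \<Rightarrow> ('h \<Rightarrow> 'k) set" where
  "gdual H = {f. lin_fun H f \<and> finite {n. \<exists>x\<in>grd H n. f x \<noteq> 0}}"

definition conv :: "('k::field, 'h::ab_group_add) ghopf \<Rightarrow> ('h \<Rightarrow> 'k) \<Rightarrow> ('h \<Rightarrow> 'k) \<Rightarrow> ('h \<Rightarrow> 'k)" where
  "conv H f g = (\<lambda>x. \<Sum>(a,b)\<leftarrow>cop H x. f a * g b)"

definition dual_ideal :: "('k::field, 'h::ab_group_add) ghopf \<Rightarrow> ('h \<Rightarrow> 'k) set \<Rightarrow> bool" where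
  "dual_ideal H J \<longleftrightarrow> J \<subseteq> gdual H \<and> (\<lambda>_. 0) \<in> J \<and>
     (\<forall>f\<in>J. \<forall>g\<in>J. (\<lambda>x. f x + g x) \<in> J) \<and>
     (\<forall>c. \<forall>f\<in>J. (\<lambda>x. c * f x) \<in> J) \<and>
     (\<forall>f\<in>J. \<forall>g\<in>gdual H. conv H f g \<in> J \<and> conv H g f \<in> J)"

definition gen_ideal :: "('k::field, 'h::ab_group_add) ghopf \<Rightarrow> ('h \<Rightarrow> 'k) set \<Rightarrow> ('h \<Rightarrow> 'k) set" where
  "gen_ideal H G = \<Inter>{J. dual_ideal H J \<and> G \<subseteq> J}"

definition comp_n :: "('k, 'h::ab_group_add) ghopf \<Rightarrow> ('h \<Rightarrow> 'k) \<Rightarrow> nat \<Rightarrow> ('h \<Rightarrow> 'k)" where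
  "comp_n H \<phi> n = (\<lambda>x. \<phi> (proj H n x))"

definition I_ideal :: "('k::field, 'h::ab_group_add) ghopf \<Rightarrow> ('h \<Rightarrow> 'k) \<Rightarrow> ('h \<Rightarrow> 'k) \<Rightarrow> ('h \<Rightarrow> 'k) set" where
  "I_ideal H \<phi> \<psi> = gen_ideal H {(\<lambda>x. comp_n H \<phi> n x - comp_n H \<psi> n x) | n. True}"

definition dual_map :: "('a \<Rightarrow> 'b) \<Rightarrow> ('b \<Rightarrow> 'k) \<Rightarrow> ('a \<Rightarrow> 'k)" where
  "dual_map \<alpha> f = f \<circ> \<alpha>"

end

theory Submission
  imports Defs
begin

text \<open>For injective \<alpha>, every linear functional on H' extends to H (and truncating its degrees keeps
  it in the graded dual), so \<alpha>* is onto and \<alpha>*(I(\<phi>, \<psi>)) is itself an ideal. Likewise a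
  functional on H' vanishing on C = \<alpha> -` S extends to one on H vanishing on S; testing the
  coproduct of x \<in> C against such functionals shows that it lies in C \<otimes> C.\<close>

lemma vector_space_field: "vector_space ((*) :: 'k::field \<Rightarrow> 'k \<Rightarrow> 'k)"
  by unfold_locales (auto simp: algebra_simps)

lemma linear_factor_through:
  assumes T: "Vector_Spaces.linear s1 s2 T" and f: "Vector_Spaces.linear s1 s3 f"
    and ker: "\<And>v. T v = 0 \<Longrightarrow> f v = 0"
  shows "\<exists>G. Vector_Spaces.linear s2 s3 G \<and> (\<forall>v. G (T v) = f v)"
proof -
  interpret T: Vector_Spaces.linear s1 s2 T by (rule T)
  interpret f: Vector_Spaces.linear s1 s3 f by (rule f)
  interpret vector_space_pair s1 s2 by unfold_locales
  obtain g where g: "Vector_Spaces.linear s2 s1 g" "\<forall>w\<in>range T. T (g w) = w"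
    using linear_exists_right_inverse_on[OF T T.vs1.subspace_UNIV] by blast
  have "f (g (T v)) = f v" for v
    using ker[of "g (T v) - v"] g(2) by (simp add: T.diff f.diff)
  then show ?thesis
    using Vector_Spaces.linear_compose[OF g(1) f] by (auto intro!: exI[of _ "f \<circ> g"])
qed

lemma linear_retraction_onto_subspace:
  assumes "vector_space s" "module.subspace s U"
  shows "\<exists>p. Vector_Spaces.linear s s p \<and> range p \<subseteq> U \<and> (\<forall>u\<in>U. p u = u)"
proof -
  interpret vector_space s by fact
  interpret vector_space_pair s s by unfold_locales
  show ?thesis using linear_exists_left_inverse_on[OF linear_id assms(2)] by auto
qed

text \<open>With q a retraction onto S, the map y \<mapsto> \<alpha> y - q (\<alpha> y) has kernel \<alpha> -` S, so f factors
  through it; precomposing the factor with id - q gives the extension.\<close>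
lemma linear_extend_vanishing:
  assumes \<alpha>: "Vector_Spaces.linear s1 s2 \<alpha>" and S: "module.subspace s2 S"
    and f: "Vector_Spaces.linear s1 s3 f" and vanish: "\<And>y. \<alpha> y \<in> S \<Longrightarrow> f y = 0"
  shows "\<exists>F. Vector_Spaces.linear s2 s3 F \<and> (\<forall>y. F (\<alpha> y) = f y) \<and> (\<forall>s\<in>S. F s = 0)"
proof -
  interpret \<alpha>: Vector_Spaces.linear s1 s2 \<alpha> by (rule \<alpha>)
  obtain q where q: "Vector_Spaces.linear s2 s2 q" "range q \<subseteq> S" "\<forall>s\<in>S. q s = s"
    using linear_retraction_onto_subspace[OF \<alpha>.vs2.vector_space_axioms S] by blast
  interpret q: Vector_Spaces.linear s2 s2 q by (rule q(1))
  have id_minus_q: "Vector_Spaces.linear s2 s2 (\<lambda>z. z - q z)"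
    unfolding Vector_Spaces.linear_iff
    by (simp add: \<alpha>.vs2.vector_space_axioms q.add q.scale \<alpha>.vs2.scale_right_diff_distrib)
  have "Vector_Spaces.linear s1 s2 ((\<lambda>z. z - q z) \<circ> \<alpha>)"
    by (rule Vector_Spaces.linear_compose[OF \<alpha> id_minus_q])
  moreover have "f y = 0" if "((\<lambda>z. z - q z) \<circ> \<alpha>) y = 0" for y
    using that q(2) vanish[of y] by auto
  ultimately obtain G where G: "Vector_Spaces.linear s2 s3 G" "\<forall>y. G (\<alpha> y - q (\<alpha> y)) = f y"
    using linear_factor_through[OF _ f] by fastforce
  interpret G: Vector_Spaces.linear s2 s3 G by (rule G(1))
  have "Vector_Spaces.linear s2 s3 (G \<circ> (\<lambda>z. z - q z))"
    by (rule Vector_Spaces.linear_compose[OF id_minus_q G(1)])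
  moreover have "G (s - q s) = 0" if "s \<in> S" for s
    using that q(3) by simp
  ultimately show ?thesis using G(2) by (intro exI[of _ "G \<circ> (\<lambda>z. z - q z)"]) auto
qed

definition tens2_eval :: "('h \<Rightarrow> 'k::field) \<Rightarrow> ('h \<Rightarrow> 'k) \<Rightarrow> ('h \<times> 'h) list \<Rightarrow> 'k" where
  "tens2_eval f g ts = (\<Sum>(a,b)\<leftarrow>ts. f a * g b)"

lemma tens2_eval_Nil [simp]: "tens2_eval f g [] = 0"
  and tens2_eval_Cons [simp]: "tens2_eval f g ((a,b) # ts) = f a * g b + tens2_eval f g ts"
  and tens2_eval_append [simp]: "tens2_eval f g (ts @ us) = tens2_eval f g ts + tens2_eval f g us"
  by (simp_all add: tens2_eval_def)

lemma tens2_eval_map: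
  "tens2_eval f g (map (\<lambda>(a,b). (u a, v b)) ts) = tens2_eval (f \<circ> u) (g \<circ> v) ts"
  by (induction ts) auto

lemma tens2_eval_eq_0:
  "(\<And>a b. (a,b) \<in> set ts \<Longrightarrow> f a = 0 \<or> g b = 0) \<Longrightarrow> tens2_eval f g ts = 0"
  by (induction ts) auto

lemma tens2_eval_diff:
  "tens2_eval f g ts - tens2_eval f' g' ts
     = tens2_eval (\<lambda>a. f a - f' a) g ts + tens2_eval f' (\<lambda>b. g b - g' b) ts"
  by (induction ts) (auto simp: algebra_simps)

lemma tens2_eq_iff_eval:
  "tens2_eq H ts us \<longleftrightarrow>
     (\<forall>f g. lin_fun H f \<longrightarrow> lin_fun H g \<longrightarrow> tens2_eval f g ts = tens2_eval f g us)"
  by (simp add: tens2_eq_def tens2_eval_def)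

lemma conv_eq_tens2_eval: "conv H f g x = tens2_eval f g (cop H x)"
  by (simp add: conv_def tens2_eval_def)

locale gc_hopf =
  fixes H :: "('k::field, 'h::ab_group_add) ghopf"
  assumes graded_connected_hopf: "graded_connected_hopf H"
begin

sublocale vs: vector_space "scl H"
  using graded_connected_hopf unfolding graded_connected_hopf_def by (elim conjE)

lemma subspace_grd [rule_format]: "\<forall>n. vs.subspace (grd H n)"
  using graded_connected_hopf unfolding graded_connected_hopf_def by (elim conjE)

lemma ex1_decomp [rule_format]: "\<forall>x. \<exists>!c. is_decomp H x c"
  using graded_connected_hopf unfolding graded_connected_hopf_def by (elim conjE)

lemma tens2_eq_cop_add_scale [rule_format]:
  "\<forall>c x y. tens2_eq H (cop H (scl H c x + y)) (map (\<lambda>(a,b). (scl H c a, b)) (cop H x) @ cop H y)"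
  using graded_connected_hopf unfolding graded_connected_hopf_def by (elim conjE)

lemma cop_graded [rule_format]:
  "\<forall>n x. x \<in> grd H n \<longrightarrow> (\<exists>ts. tens2_eq H (cop H x) ts \<and>
     (\<forall>(a,b)\<in>set ts. \<exists>i j. i + j = n \<and> a \<in> grd H i \<and> b \<in> grd H j))"
  using graded_connected_hopf unfolding graded_connected_hopf_def by (elim conjE)

lemma lin_funI:
  assumes "\<And>x y. f (x + y) = f x + f y" "\<And>c x. f (scl H c x) = c * f x"
  shows "lin_fun H f"
  using assms unfolding lin_fun_def Vector_Spaces.linear_iff
  using vs.vector_space_axioms vector_space_field by blast

lemma lin_funD:
  assumes "lin_fun H f"
  shows "f (x + y) = f x + f y" "f (scl H c x) = c * f x" "f 0 = 0" "f (x - y) = f x - f y"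
    "f (sum u A) = (\<Sum>a\<in>A. f (u a))"
proof -
  interpret Vector_Spaces.linear "scl H" "(*)" f using assms unfolding lin_fun_def .
  show "f (x + y) = f x + f y" "f (scl H c x) = c * f x" "f 0 = 0" "f (x - y) = f x - f y"
    "f (sum u A) = (\<Sum>a\<in>A. f (u a))"
    by (simp_all add: add scale diff sum)
qed

lemma lin_fun_add: "lin_fun H f \<Longrightarrow> lin_fun H g \<Longrightarrow> lin_fun H (\<lambda>x. f x + g x)"
  and lin_fun_diff: "lin_fun H f \<Longrightarrow> lin_fun H g \<Longrightarrow> lin_fun H (\<lambda>x. f x - g x)"
  and lin_fun_cmult: "lin_fun H f \<Longrightarrow> lin_fun H (\<lambda>x. c * f x)"
  by (auto intro!: lin_funI simp: lin_funD algebra_simps)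

lemma lin_fun_zero: "lin_fun H (\<lambda>x. 0)"
  by (rule lin_funI) auto

lemma lin_fun_compose:
  "Vector_Spaces.linear (scl H) (scl H) p \<Longrightarrow> lin_fun H f \<Longrightarrow> lin_fun H (f \<circ> p)"
  unfolding lin_fun_def by (rule Vector_Spaces.linear_compose)

lemma tens2_eval_scale:
  "lin_fun H f \<Longrightarrow> tens2_eval f g (map (\<lambda>(a,b). (scl H c a, b)) ts) = c * tens2_eval f g ts"
  by (induction ts) (auto simp: lin_funD algebra_simps)

lemma lin_fun_conv:
  assumes f: "lin_fun H f" and g: "lin_fun H g"
  shows "lin_fun H (conv H f g)"
proof -
  have affine: "conv H f g (scl H c x + y) = c * conv H f g x + conv H f g y" for c x y
    using tens2_eq_cop_add_scale[of c x y] f g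
    by (simp add: tens2_eq_iff_eval conv_eq_tens2_eval tens2_eval_scale)
  then have "conv H f g 0 = 0"
    using affine[of 1 0 0] by (metis add_0 add_cancel_right_right mult_1 vs.scale_one)
  then show ?thesis
    using affine[of 1] affine[of _ _ 0] by (intro lin_funI) simp_all
qed

lemma is_decomp_proj: "is_decomp H x (\<lambda>m. proj H m x)"
  unfolding proj_def using theI'[OF ex1_decomp] by simp

lemma proj_eqI:
  assumes "\<And>m. c m \<in> grd H m" "finite F" "\<And>m. m \<notin> F \<Longrightarrow> c m = 0" "x = sum c F"
  shows "proj H n x = c n"
proof -
  have "{m. c m \<noteq> 0} \<subseteq> F" using assms(3) by blast
  then have "finite {m. c m \<noteq> 0}" "sum c F = sum c {m. c m \<noteq> 0}"
    using assms(2) by (auto intro: finite_subset sum.mono_neutral_right)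
  then have "is_decomp H x c" using assms unfolding is_decomp_def by auto
  then show ?thesis unfolding proj_def using the1_equality[OF ex1_decomp] by metis
qed

lemma proj_grd: "proj H n x \<in> grd H n"
  and finite_proj_nonzero: "finite {m. proj H m x \<noteq> 0}"
  using is_decomp_proj[of x] unfolding is_decomp_def by auto

lemma sum_proj:
  assumes "finite F" "{m. proj H m x \<noteq> 0} \<subseteq> F"
  shows "(\<Sum>m\<in>F. proj H m x) = x"
  using is_decomp_proj[of x] sum.mono_neutral_right[OF assms, of "\<lambda>m. proj H m x"]
  unfolding is_decomp_def by simp

lemma zero_grd: "0 \<in> grd H n"
  using subspace_grd vs.subspace_0 by blast

lemma proj_homogeneous: "x \<in> grd H m \<Longrightarrow> proj H n x = (if n = m then x else 0)"
  by (rule proj_eqI[where F="{m}"]) (auto simp: zero_grd)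

lemma linear_proj: "Vector_Spaces.linear (scl H) (scl H) (proj H n)"
proof -
  have "proj H n (scl H c x + y) = scl H c (proj H n x) + proj H n y" for c x y
  proof (rule proj_eqI[where F="{m. proj H m x \<noteq> 0} \<union> {m. proj H m y \<noteq> 0}"])
    show "scl H c (proj H m x) + proj H m y \<in> grd H m" for m
      using subspace_grd proj_grd by (simp add: vs.subspace_add vs.subspace_scale)
    show "scl H c x + y = (\<Sum>m\<in>{m. proj H m x \<noteq> 0} \<union> {m. proj H m y \<noteq> 0}.
        scl H c (proj H m x) + proj H m y)"
      by (simp add: sum.distrib vs.scale_sum_right[symmetric] sum_proj finite_proj_nonzero)
  qed (auto simp: finite_proj_nonzero)
  from this[of _ _ 0] this[of 1] show ?thesis
    unfolding Vector_Spaces.linear_iff using vs.vector_space_axioms proj_homogeneous[OF zero_grd]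
    by simp
qed

lemma lin_fun_sum_proj:
  assumes "lin_fun H f" "finite F" "{m. proj H m x \<noteq> 0} \<subseteq> F"
  shows "(\<Sum>m\<in>F. f (proj H m x)) = f x"
  using sum_proj[OF assms(2,3)] lin_funD(5)[OF assms(1)] by metis

definition cop_within :: "'h set \<Rightarrow> 'h set" where
  "cop_within C = {x. \<exists>ts. tens2_eq H (cop H x) ts \<and> set ts \<subseteq> C \<times> C}"

lemma graded_subcoalgebra_iff:
  "graded_subcoalgebra H C \<longleftrightarrow>
     vs.subspace C \<and> (\<forall>x\<in>C. \<forall>n. proj H n x \<in> C) \<and> C \<subseteq> cop_within C"
  unfolding graded_subcoalgebra_def cop_within_def by blast

lemma subspace_cop_within:
  assumes C: "vs.subspace C"
  shows "vs.subspace (cop_within C)"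
proof -
  have eval_cop: "tens2_eval f g (cop H x) = conv H f g x" for f g x
    by (simp add: conv_eq_tens2_eval)
  note conv_lin = lin_funD[OF lin_fun_conv]
  have "0 \<in> cop_within C"
    unfolding cop_within_def tens2_eq_iff_eval eval_cop
    by (auto intro!: exI[of _ "[]"] simp: conv_lin)
  moreover have "x + y \<in> cop_within C" if xy: "x \<in> cop_within C" "y \<in> cop_within C" for x y
  proof -
    obtain ts us where "tens2_eq H (cop H x) ts" "set ts \<subseteq> C \<times> C"
      "tens2_eq H (cop H y) us" "set us \<subseteq> C \<times> C"
      using xy unfolding cop_within_def by blast
    then show ?thesis
      unfolding cop_within_def tens2_eq_iff_eval eval_cop
      by (auto intro!: exI[of _ "ts @ us"] simp: conv_lin)
  qed
  moreover have "scl H c x \<in> cop_within C" if x: "x \<in> cop_within C" for c x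
  proof -
    obtain ts where ts: "tens2_eq H (cop H x) ts" "set ts \<subseteq> C \<times> C"
      using x unfolding cop_within_def by blast
    have "set (map (\<lambda>(a,b). (scl H c a, b)) ts) \<subseteq> C \<times> C"
      using ts(2) C by (force intro: vs.subspace_scale)
    with ts(1) show ?thesis
      unfolding cop_within_def tens2_eq_iff_eval eval_cop
      by (intro CollectI exI[of _ "map (\<lambda>(a,b). (scl H c a, b)) ts"] conjI)
        (auto simp: conv_lin tens2_eval_scale)
  qed
  ultimately show ?thesis unfolding vs.subspace_def by blast
qed

text \<open>The representative in C \<times> C is obtained by applying a linear retraction onto C to both
  tensor factors.\<close>
lemma tens2_eq_within_subspace:
  assumes C: "vs.subspace C"
    and vanish: "\<And>f g. lin_fun H f \<Longrightarrow> lin_fun H g \<Longrightarrow> (\<forall>c\<in>C. f c = 0) \<Longrightarrow>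
                   tens2_eval f g ts = 0 \<and> tens2_eval g f ts = 0"
  shows "\<exists>us. tens2_eq H ts us \<and> set us \<subseteq> C \<times> C"
proof -
  obtain p where p: "Vector_Spaces.linear (scl H) (scl H) p" "range p \<subseteq> C" "\<forall>u\<in>C. p u = u"
    using linear_retraction_onto_subspace[OF vs.vector_space_axioms C] by blast
  let ?us = "map (\<lambda>(a,b). (p a, p b)) ts"
  have "tens2_eval f g ts = tens2_eval f g ?us" if f: "lin_fun H f" and g: "lin_fun H g" for f g
  proof -
    have fp: "lin_fun H (f \<circ> p)" and gp: "lin_fun H (g \<circ> p)"
      using lin_fun_compose[OF p(1)] f g by blast+
    have "tens2_eval (\<lambda>a. f a - (f \<circ> p) a) g ts = 0"
      using vanish[OF lin_fun_diff[OF f fp] g] p(3) by auto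
    moreover have "tens2_eval (f \<circ> p) (\<lambda>b. g b - (g \<circ> p) b) ts = 0"
      using vanish[OF lin_fun_diff[OF g gp] fp] p(3) by auto
    ultimately show ?thesis
      using tens2_eval_diff[of f g ts "f \<circ> p" "g \<circ> p"] by (simp add: tens2_eval_map)
  qed
  moreover have "set ?us \<subseteq> C \<times> C" using p(2) by auto
  ultimately show ?thesis unfolding tens2_eq_iff_eval by blast
qed

lemma cop_within_mono: "C \<subseteq> D \<Longrightarrow> cop_within C \<subseteq> cop_within D"
  unfolding cop_within_def by blast

text \<open>GREATEST is not junk here: the span of the union of all admissible C is admissible.\<close>
lemma S_coalg_greatest:
  assumes "lin_fun H \<phi>" "lin_fun H \<psi>"
  defines "P \<equiv> \<lambda>C. graded_subcoalgebra H C \<and> (\<forall>x\<in>C. \<phi> x = \<psi> x)"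
  shows "P (S_coalg H \<phi> \<psi>)" and "P C \<Longrightarrow> C \<subseteq> S_coalg H \<phi> \<psi>"
proof -
  define U where "U = \<Union>{C. P C}"
  define B where "B = vs.span U"
  have "U \<subseteq> B" unfolding B_def by (rule vs.span_superset)
  then have C_B: "C \<subseteq> B" if "P C" for C
    using that unfolding U_def by blast
  have "vs.subspace (proj H n -` B)" for n
    unfolding B_def by (rule module_hom.subspace_vimage[OF linear_proj[THEN module_hom_linearI]]) simp
  then have "vs.subspace (\<Inter>n. proj H n -` B)"
    by (rule vs.subspace_Int)
  moreover have "U \<subseteq> (\<Inter>n. proj H n -` B)"
  proof
    fix x assume "x \<in> U"
    then obtain C where C: "P C" "x \<in> C" unfolding U_def by blast
    then have "proj H n x \<in> C" for n unfolding P_def graded_subcoalgebra_iff by blast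
    with C_B[OF C(1)] show "x \<in> (\<Inter>n. proj H n -` B)" by blast
  qed
  ultimately have graded: "B \<subseteq> (\<Inter>n. proj H n -` B)"
    unfolding B_def by (rule vs.span_minimal[rotated])
  have "U \<subseteq> cop_within B"
  proof
    fix x assume "x \<in> U"
    then obtain C where C: "P C" "x \<in> C" unfolding U_def by blast
    then have "x \<in> cop_within C" unfolding P_def graded_subcoalgebra_iff by blast
    with cop_within_mono[OF C_B[OF C(1)]] show "x \<in> cop_within B" by blast
  qed
  then have coalgebra: "B \<subseteq> cop_within B"
    unfolding B_def by (rule vs.span_minimal[OF _ subspace_cop_within[OF vs.subspace_span]])
  have "vs.subspace {x. \<phi> x = \<psi> x}"
    using assms(1,2) unfolding vs.subspace_def by (simp add: lin_funD)
  moreover have "U \<subseteq> {x. \<phi> x = \<psi> x}" unfolding U_def P_def by blast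
  ultimately have agree: "B \<subseteq> {x. \<phi> x = \<psi> x}"
    unfolding B_def by (rule vs.span_minimal[rotated])
  have "P B"
    using graded coalgebra agree unfolding P_def graded_subcoalgebra_iff B_def by blast
  moreover have "S_coalg H \<phi> \<psi> = B"
    unfolding S_coalg_def P_def[symmetric] using \<open>P B\<close> C_B by (rule Greatest_equality)
  ultimately show "P (S_coalg H \<phi> \<psi>)" and "P C \<Longrightarrow> C \<subseteq> S_coalg H \<phi> \<psi>"
    using C_B by auto
qed

lemma lin_fun_sum: "(\<And>i. i \<in> I \<Longrightarrow> lin_fun H (f i)) \<Longrightarrow> lin_fun H (\<lambda>x. \<Sum>i\<in>I. f i x)"
  by (rule lin_funI) (simp_all add: lin_funD sum.distrib sum_distrib_left)

lemma lin_fun_gdual: "f \<in> gdual H \<Longrightarrow> lin_fun H f"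
  unfolding gdual_def by blast

lemma conv_gdual:
  assumes f: "f \<in> gdual H" and g: "g \<in> gdual H"
  shows "conv H f g \<in> gdual H"
proof -
  let ?Sf = "{n. \<exists>x\<in>grd H n. f x \<noteq> 0}" and ?Sg = "{n. \<exists>x\<in>grd H n. g x \<noteq> 0}"
  have "n \<in> (\<lambda>(i,j). i + j) ` (?Sf \<times> ?Sg)" if x: "x \<in> grd H n" "conv H f g x \<noteq> 0" for n x
  proof (rule ccontr)
    assume n: "n \<notin> (\<lambda>(i,j). i + j) ` (?Sf \<times> ?Sg)"
    obtain ts where ts: "tens2_eq H (cop H x) ts"
      "\<forall>(a,b)\<in>set ts. \<exists>i j. i + j = n \<and> a \<in> grd H i \<and> b \<in> grd H j"
      using cop_graded[OF x(1)] by blast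
    have "conv H f g x = tens2_eval f g ts"
      using ts(1) f g by (simp add: conv_eq_tens2_eval tens2_eq_iff_eval lin_fun_gdual)
    also have "\<dots> = 0"
    proof (rule tens2_eval_eq_0)
      fix a b assume "(a,b) \<in> set ts"
      then obtain i j where "i + j = n" "a \<in> grd H i" "b \<in> grd H j" using ts(2) by blast
      then show "f a = 0 \<or> g b = 0" using n by force
    qed
    finally show False using x(2) by contradiction
  qed
  then have "{n. \<exists>x\<in>grd H n. conv H f g x \<noteq> 0} \<subseteq> (\<lambda>(i,j). i + j) ` (?Sf \<times> ?Sg)"
    by blast
  moreover have "finite ?Sf" "finite ?Sg" using f g by (simp_all add: gdual_def)
  ultimately have "finite {n. \<exists>x\<in>grd H n. conv H f g x \<noteq> 0}"
    by (meson finite_SigmaI finite_imageI finite_subset)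
  with f g show ?thesis by (simp add: gdual_def lin_fun_conv)
qed

lemma gdual_dual_ideal: "dual_ideal H (gdual H)"
proof -
  have "(\<lambda>x. f x + g x) \<in> gdual H" if "f \<in> gdual H" "g \<in> gdual H" for f g
  proof -
    have "{n. \<exists>x\<in>grd H n. f x + g x \<noteq> 0}
        \<subseteq> {n. \<exists>x\<in>grd H n. f x \<noteq> 0} \<union> {n. \<exists>x\<in>grd H n. g x \<noteq> 0}"
      by force
    with that show ?thesis by (auto simp: gdual_def lin_fun_add dest: finite_subset)
  qed
  moreover have "(\<lambda>x. c * f x) \<in> gdual H" if "f \<in> gdual H" for c f
  proof -
    have "{n. \<exists>x\<in>grd H n. c * f x \<noteq> 0} \<subseteq> {n. \<exists>x\<in>grd H n. f x \<noteq> 0}"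
      by force
    with that show ?thesis by (auto simp: gdual_def lin_fun_cmult dest: finite_subset)
  qed
  moreover have "(\<lambda>_. 0) \<in> gdual H" by (simp add: gdual_def lin_fun_zero)
  ultimately show ?thesis
    unfolding dual_ideal_def using conv_gdual by blast
qed

lemma dual_ideal_gen_ideal:
  assumes "G \<subseteq> gdual H"
  shows "dual_ideal H (gen_ideal H G)"
proof -
  have "gdual H \<in> {J. dual_ideal H J \<and> G \<subseteq> J}" using assms gdual_dual_ideal by blast
  then have "\<Inter>{J. dual_ideal H J \<and> G \<subseteq> J} \<subseteq> gdual H" by blast
  then show ?thesis
    unfolding gen_ideal_def dual_ideal_def[of H "\<Inter>_"]
    by (intro conjI ballI allI) (auto simp: dual_ideal_def)
qed

lemma gen_ideal_superset: "G \<subseteq> gen_ideal H G"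
  unfolding gen_ideal_def by blast

lemma gen_ideal_least: "dual_ideal H J \<Longrightarrow> G \<subseteq> J \<Longrightarrow> gen_ideal H G \<subseteq> J"
  unfolding gen_ideal_def by blast

lemma gen_ideal_mono: "G \<subseteq> G' \<Longrightarrow> gen_ideal H G \<subseteq> gen_ideal H G'"
  unfolding gen_ideal_def by blast

definition I_generators :: "('h \<Rightarrow> 'k) \<Rightarrow> ('h \<Rightarrow> 'k) \<Rightarrow> ('h \<Rightarrow> 'k) set" where
  "I_generators \<phi> \<psi> = range (\<lambda>n x. comp_n H \<phi> n x - comp_n H \<psi> n x)"

lemma I_ideal_eq_gen_ideal: "I_ideal H \<phi> \<psi> = gen_ideal H (I_generators \<phi> \<psi>)"
  unfolding I_ideal_def I_generators_def by (simp add: full_SetCompr_eq)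

lemma I_generators_gdual:
  assumes "lin_fun H \<phi>" "lin_fun H \<psi>"
  shows "I_generators \<phi> \<psi> \<subseteq> gdual H"
proof
  fix h assume "h \<in> I_generators \<phi> \<psi>"
  then obtain n where h: "h = (\<lambda>x. \<phi> (proj H n x) - \<psi> (proj H n x))"
    unfolding I_generators_def comp_n_def by blast
  have "lin_fun H h"
    unfolding h using lin_fun_compose[OF linear_proj] assms lin_fun_diff by (simp add: o_def)
  moreover have "{m. \<exists>x\<in>grd H m. h x \<noteq> 0} \<subseteq> {n}"
    unfolding h using assms by (auto simp: proj_homogeneous lin_funD)
  ultimately show "h \<in> gdual H" unfolding gdual_def by (auto intro: finite_subset)
qed

end

locale gc_hopf_morphism = H': gc_hopf H' + H: gc_hopf H
  for H' :: "('k::field, 'a::ab_group_add) ghopf" and H :: "('k, 'b::ab_group_add) ghopf" +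
  fixes \<alpha> :: "'a \<Rightarrow> 'b"
  assumes hopf_morphism: "hopf_morphism H' H \<alpha>"
begin

sublocale \<alpha>: Vector_Spaces.linear "scl H'" "scl H" \<alpha>
  using hopf_morphism unfolding hopf_morphism_def by (elim conjE)

lemma grd_morphism [rule_format]: "\<forall>n x. x \<in> grd H' n \<longrightarrow> \<alpha> x \<in> grd H n"
  using hopf_morphism unfolding hopf_morphism_def by (elim conjE)

lemma tens2_eq_cop_morphism [rule_format]:
  "\<forall>x. tens2_eq H (map (\<lambda>(a,b). (\<alpha> a, \<alpha> b)) (cop H' x)) (cop H (\<alpha> x))"
  using hopf_morphism unfolding hopf_morphism_def by (elim conjE)

lemma lin_fun_compose_morphism: "lin_fun H f \<Longrightarrow> lin_fun H' (f \<circ> \<alpha>)"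
  unfolding lin_fun_def by (rule Vector_Spaces.linear_compose[OF \<alpha>.linear_axioms])

lemma proj_morphism: "proj H n (\<alpha> x) = \<alpha> (proj H' n x)"
proof (rule H.proj_eqI[where F="{m. proj H' m x \<noteq> 0}"])
  show "\<alpha> x = (\<Sum>m\<in>{m. proj H' m x \<noteq> 0}. \<alpha> (proj H' m x))"
    by (simp add: \<alpha>.sum[symmetric] H'.sum_proj H'.finite_proj_nonzero)
qed (auto simp: grd_morphism H'.proj_grd H'.finite_proj_nonzero)

lemma tens2_eval_cop_morphism:
  "lin_fun H f \<Longrightarrow> lin_fun H g \<Longrightarrow>
     tens2_eval f g (cop H (\<alpha> x)) = tens2_eval (f \<circ> \<alpha>) (g \<circ> \<alpha>) (cop H' x)"
  using tens2_eq_cop_morphism[of x] unfolding tens2_eq_iff_eval tens2_eval_map by metis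

lemma dual_map_conv:
  "lin_fun H f \<Longrightarrow> lin_fun H g \<Longrightarrow>
     dual_map \<alpha> (conv H f g) = conv H' (dual_map \<alpha> f) (dual_map \<alpha> g)"
  unfolding dual_map_def by (rule ext) (simp add: conv_eq_tens2_eval tens2_eval_cop_morphism)

lemma dual_map_gdual: "f \<in> gdual H \<Longrightarrow> dual_map \<alpha> f \<in> gdual H'"
proof -
  assume f: "f \<in> gdual H"
  have "{n. \<exists>x\<in>grd H' n. dual_map \<alpha> f x \<noteq> 0} \<subseteq> {n. \<exists>y\<in>grd H n. f y \<noteq> 0}"
    using grd_morphism unfolding dual_map_def by fastforce
  with f show ?thesis
    unfolding gdual_def dual_map_def by (auto intro: finite_subset lin_fun_compose_morphism)
qed

lemma dual_map_I_generators:
  "dual_map \<alpha> ` H.I_generators \<phi> \<psi> = H'.I_generators (\<phi> \<circ> \<alpha>) (\<psi> \<circ> \<alpha>)"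
  unfolding H.I_generators_def H'.I_generators_def image_image dual_map_def comp_n_def
  by (simp add: o_def proj_morphism)

lemma graded_subcoalgebra_image:
  assumes "graded_subcoalgebra H' C"
  shows "graded_subcoalgebra H (\<alpha> ` C)"
  unfolding H.graded_subcoalgebra_iff
proof (intro conjI ballI allI subsetI)
  note C = assms[unfolded H'.graded_subcoalgebra_iff]
  show "H.vs.subspace (\<alpha> ` C)" using C by (simp add: \<alpha>.subspace_image)
  show "proj H n y \<in> \<alpha> ` C" if "y \<in> \<alpha> ` C" for y n
    using that C by (auto simp: proj_morphism)
  fix y assume "y \<in> \<alpha> ` C"
  then obtain x where x: "x \<in> C" "y = \<alpha> x" by blast
  then obtain ts where ts: "tens2_eq H' (cop H' x) ts" "set ts \<subseteq> C \<times> C"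
    using C unfolding H'.cop_within_def by blast
  have "tens2_eq H (cop H y) (map (\<lambda>(a,b). (\<alpha> a, \<alpha> b)) ts)"
    using ts(1) unfolding x(2) tens2_eq_iff_eval
    by (simp add: tens2_eval_cop_morphism tens2_eval_map lin_fun_compose_morphism)
  moreover have "set (map (\<lambda>(a,b). (\<alpha> a, \<alpha> b)) ts) \<subseteq> \<alpha> ` C \<times> \<alpha> ` C"
    using ts(2) by auto
  ultimately show "y \<in> H.cop_within (\<alpha> ` C)" unfolding H.cop_within_def by blast
qed

lemma S_coalg_image_subset:
  assumes "lin_fun H \<phi>" "lin_fun H \<psi>"
  shows "\<alpha> ` S_coalg H' (\<phi> \<circ> \<alpha>) (\<psi> \<circ> \<alpha>) \<subseteq> S_coalg H \<phi> \<psi>"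
  using H'.S_coalg_greatest(1)[OF assms[THEN lin_fun_compose_morphism]]
  by (intro H.S_coalg_greatest(2)[OF assms]) (auto intro: graded_subcoalgebra_image)

lemma lin_fun_extend_vanishing:
  assumes "H.vs.subspace S" "lin_fun H' f" "\<And>y. \<alpha> y \<in> S \<Longrightarrow> f y = 0"
  obtains F where "lin_fun H F" "f = F \<circ> \<alpha>" "\<And>s. s \<in> S \<Longrightarrow> F s = 0"
  using linear_extend_vanishing[OF \<alpha>.linear_axioms assms[unfolded lin_fun_def]]
  unfolding lin_fun_def by (metis comp_apply ext)

lemma lin_fun_extend:
  assumes "inj \<alpha>" "lin_fun H' f"
  obtains F where "lin_fun H F" "f = F \<circ> \<alpha>"
proof -
  have "f y = 0" if "\<alpha> y \<in> {0}" for y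
    using that assms injD[OF assms(1), of y 0] H'.lin_funD(3) by auto
  then show ?thesis
    using lin_fun_extend_vanishing[OF H.vs.subspace_single_0 assms(2)] that by blast
qed

lemma dual_map_surj_gdual:
  assumes "inj \<alpha>" "f \<in> gdual H'"
  obtains F where "F \<in> gdual H" "dual_map \<alpha> F = f"
proof -
  define N where "N = {n. \<exists>x\<in>grd H' n. f x \<noteq> 0}"
  have lf: "lin_fun H' f" and N: "finite N" using assms(2) unfolding gdual_def N_def by auto
  obtain G where G: "lin_fun H G" "f = G \<circ> \<alpha>" using lin_fun_extend[OF assms(1) lf] .
  \<comment> \<open>G need not lie in the graded dual; cutting it down to the degrees in N repairs this.\<close>
  define F where "F y = (\<Sum>n\<in>N. G (proj H n y))" for y
  have "lin_fun H F"
    unfolding F_def using H.lin_fun_compose[OF H.linear_proj G(1)]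
    by (intro H.lin_fun_sum) (simp add: o_def)
  moreover have "F y = 0" if "y \<in> grd H m" "m \<notin> N" for y m
    unfolding F_def using that H.lin_funD(3)[OF G(1)]
    by (intro sum.neutral) (auto simp: H.proj_homogeneous)
  ultimately have "F \<in> gdual H"
    using N unfolding gdual_def by (auto intro: finite_subset[of _ N])
  moreover have "dual_map \<alpha> F x = f x" for x
  proof -
    have "dual_map \<alpha> F x = (\<Sum>n\<in>N. f (proj H' n x))"
      unfolding dual_map_def F_def G(2) by (simp add: proj_morphism)
    also have "\<dots> = (\<Sum>n\<in>N \<union> {m. proj H' m x \<noteq> 0}. f (proj H' n x))"
      using N H'.finite_proj_nonzero H'.proj_grd unfolding N_def
      by (intro sum.mono_neutral_left) auto
    also have "\<dots> = f x"
      using N H'.finite_proj_nonzero by (intro H'.lin_fun_sum_proj[OF lf]) auto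
    finally show ?thesis .
  qed
  ultimately show ?thesis using that by blast
qed

lemma graded_subcoalgebra_vimage:
  assumes inj: "inj \<alpha>" and S: "graded_subcoalgebra H S"
  shows "graded_subcoalgebra H' (\<alpha> -` S)"
  unfolding H'.graded_subcoalgebra_iff
proof (intro conjI ballI allI subsetI)
  note S' = S[unfolded H.graded_subcoalgebra_iff]
  show sub: "H'.vs.subspace (\<alpha> -` S)" using S' by (simp add: \<alpha>.subspace_vimage)
  show "proj H' n x \<in> \<alpha> -` S" if "x \<in> \<alpha> -` S" for x n
    using that S' by (simp add: proj_morphism[symmetric])
  fix x assume "x \<in> \<alpha> -` S"
  then obtain ts where ts: "tens2_eq H (cop H (\<alpha> x)) ts" "set ts \<subseteq> S \<times> S"
    using S' unfolding H.cop_within_def by blast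
  have "tens2_eval f g (cop H' x) = 0 \<and> tens2_eval g f (cop H' x) = 0"
    if f: "lin_fun H' f" and g: "lin_fun H' g" and vanish: "\<forall>c\<in>\<alpha> -` S. f c = 0" for f g
  proof -
    obtain F where F: "lin_fun H F" "f = F \<circ> \<alpha>" "\<And>s. s \<in> S \<Longrightarrow> F s = 0"
      using lin_fun_extend_vanishing[OF S'[THEN conjunct1] f] vanish by blast
    obtain G where G: "lin_fun H G" "g = G \<circ> \<alpha>" using lin_fun_extend[OF inj g] .
    have "tens2_eval f g (cop H' x) = tens2_eval F G ts"
      using ts(1) F G unfolding tens2_eq_iff_eval by (simp add: tens2_eval_cop_morphism)
    moreover have "tens2_eval g f (cop H' x) = tens2_eval G F ts"
      using ts(1) F G unfolding tens2_eq_iff_eval by (simp add: tens2_eval_cop_morphism)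
    moreover have "tens2_eval F G ts = 0" "tens2_eval G F ts = 0"
      using ts(2) F(3) by (auto intro!: tens2_eval_eq_0)
    ultimately show ?thesis by simp
  qed
  then show "x \<in> H'.cop_within (\<alpha> -` S)"
    unfolding H'.cop_within_def using H'.tens2_eq_within_subspace[OF sub] by blast
qed

lemma S_coalg_vimage:
  assumes "inj \<alpha>" "lin_fun H \<phi>" "lin_fun H \<psi>"
  shows "S_coalg H' (\<phi> \<circ> \<alpha>) (\<psi> \<circ> \<alpha>) = \<alpha> -` S_coalg H \<phi> \<psi>"
proof
  show "S_coalg H' (\<phi> \<circ> \<alpha>) (\<psi> \<circ> \<alpha>) \<subseteq> \<alpha> -` S_coalg H \<phi> \<psi>"
    using S_coalg_image_subset[OF assms(2,3)] by blast
  show "\<alpha> -` S_coalg H \<phi> \<psi> \<subseteq> S_coalg H' (\<phi> \<circ> \<alpha>) (\<psi> \<circ> \<alpha>)"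
    using H.S_coalg_greatest(1)[OF assms(2,3)]
    by (intro H'.S_coalg_greatest(2)[OF assms(2,3)[THEN lin_fun_compose_morphism]])
      (auto intro: graded_subcoalgebra_vimage[OF assms(1)])
qed

lemma dual_ideal_dual_map_vimage:
  assumes J: "dual_ideal H' J"
  shows "dual_ideal H {f \<in> gdual H. dual_map \<alpha> f \<in> J}"
  unfolding dual_ideal_def[of H]
proof (intro conjI ballI allI)
  note J' = J[unfolded dual_ideal_def] and gdual = H.gdual_dual_ideal[unfolded dual_ideal_def]
  let ?K = "{f \<in> gdual H. dual_map \<alpha> f \<in> J}"
  show "?K \<subseteq> gdual H" by blast
  show "(\<lambda>_. 0) \<in> ?K" using J' gdual by (simp add: dual_map_def o_def)
  show "(\<lambda>x. f x + g x) \<in> ?K" if "f \<in> ?K" "g \<in> ?K" for f g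
    using that J' gdual by (simp add: dual_map_def o_def)
  show "(\<lambda>x. c * f x) \<in> ?K" if "f \<in> ?K" for c f
    using that J' gdual by (simp add: dual_map_def o_def)
  show "conv H f g \<in> ?K" "conv H g f \<in> ?K" if "f \<in> ?K" "g \<in> gdual H" for f g
    using that J' H.conv_gdual dual_map_gdual
    by (simp_all add: dual_map_conv H.lin_fun_gdual)
qed

lemma dual_ideal_dual_map_image:
  assumes inj: "inj \<alpha>" and J: "dual_ideal H J"
  shows "dual_ideal H' (dual_map \<alpha> ` J)"
  unfolding dual_ideal_def[of H']
proof (intro conjI ballI allI)
  note J' = J[unfolded dual_ideal_def]
  show "dual_map \<alpha> ` J \<subseteq> gdual H'" using J' dual_map_gdual by blast
  show "(\<lambda>_. 0) \<in> dual_map \<alpha> ` J"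
    using J' by (intro image_eqI[of _ _ "\<lambda>_. 0"]) (simp_all add: dual_map_def o_def)
  show "(\<lambda>x. f x + g x) \<in> dual_map \<alpha> ` J" if "f \<in> dual_map \<alpha> ` J" "g \<in> dual_map \<alpha> ` J" for f g
    using that J' by (auto intro!: image_eqI[of _ _ "\<lambda>x. _ x + _ x"] simp: dual_map_def o_def)
  show "(\<lambda>x. c * f x) \<in> dual_map \<alpha> ` J" if "f \<in> dual_map \<alpha> ` J" for c f
    using that J' by (auto intro!: image_eqI[of _ _ "\<lambda>x. c * _ x"] simp: dual_map_def o_def)
  show "conv H' f g \<in> dual_map \<alpha> ` J" "conv H' g f \<in> dual_map \<alpha> ` J"
    if f: "f \<in> dual_map \<alpha> ` J" and g: "g \<in> gdual H'" for f g
  proof -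
    obtain f0 where f0: "f0 \<in> J" "f = dual_map \<alpha> f0" using f by blast
    obtain g0 where g0: "g0 \<in> gdual H" "g = dual_map \<alpha> g0"
      using dual_map_surj_gdual[OF inj g] by metis
    have lin: "lin_fun H f0" "lin_fun H g0"
      using f0(1) g0(1) J' by (auto intro: H.lin_fun_gdual)
    show "conv H' f g \<in> dual_map \<alpha> ` J" "conv H' g f \<in> dual_map \<alpha> ` J"
      unfolding f0(2) g0(2) dual_map_conv[OF lin, symmetric] dual_map_conv[OF lin(2,1), symmetric]
      using f0(1) g0(1) J' by blast+
  qed
qed

lemma dual_map_gen_ideal_subset:
  assumes "G \<subseteq> gdual H"
  shows "dual_map \<alpha> ` gen_ideal H G \<subseteq> gen_ideal H' (dual_map \<alpha> ` G)"
proof -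
  have "dual_ideal H' (gen_ideal H' (dual_map \<alpha> ` G))"
    using assms dual_map_gdual by (intro H'.dual_ideal_gen_ideal) blast
  then have "dual_ideal H {f \<in> gdual H. dual_map \<alpha> f \<in> gen_ideal H' (dual_map \<alpha> ` G)}"
    by (rule dual_ideal_dual_map_vimage)
  moreover have "G \<subseteq> {f \<in> gdual H. dual_map \<alpha> f \<in> gen_ideal H' (dual_map \<alpha> ` G)}"
    using assms H'.gen_ideal_superset by blast
  ultimately show ?thesis using H.gen_ideal_least by blast
qed

lemma gen_ideal_dual_map_gen_ideal:
  assumes "G \<subseteq> gdual H"
  shows "gen_ideal H' (dual_map \<alpha> ` gen_ideal H G) = gen_ideal H' (dual_map \<alpha> ` G)"
proof
  show "gen_ideal H' (dual_map \<alpha> ` gen_ideal H G) \<subseteq> gen_ideal H' (dual_map \<alpha> ` G)"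
    using assms dual_map_gdual
    by (intro H'.gen_ideal_least H'.dual_ideal_gen_ideal dual_map_gen_ideal_subset) blast+
  show "gen_ideal H' (dual_map \<alpha> ` G) \<subseteq> gen_ideal H' (dual_map \<alpha> ` gen_ideal H G)"
    by (intro H'.gen_ideal_mono image_mono H.gen_ideal_superset)
qed

lemma dual_map_gen_ideal:
  assumes "inj \<alpha>" "G \<subseteq> gdual H"
  shows "dual_map \<alpha> ` gen_ideal H G = gen_ideal H' (dual_map \<alpha> ` G)"
proof
  show "dual_map \<alpha> ` gen_ideal H G \<subseteq> gen_ideal H' (dual_map \<alpha> ` G)"
    using assms(2) by (rule dual_map_gen_ideal_subset)
  show "gen_ideal H' (dual_map \<alpha> ` G) \<subseteq> dual_map \<alpha> ` gen_ideal H G"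
    using assms H.dual_ideal_gen_ideal
    by (intro H'.gen_ideal_least dual_ideal_dual_map_image image_mono H.gen_ideal_superset)
qed

end

theorem proposition5p6:
  fixes H' :: "('k::field, 'a::ab_group_add) ghopf"
    and H :: "('k, 'b::ab_group_add) ghopf"
    and \<alpha> :: "'a \<Rightarrow> 'b"
    and \<phi> \<psi> :: "'b \<Rightarrow> 'k"
  assumes "graded_connected_hopf H'" and "graded_connected_hopf H"
    and "hopf_morphism H' H \<alpha>"
    and "character H \<phi>" and "character H \<psi>"
  shows "\<alpha> ` S_coalg H' (\<phi> \<circ> \<alpha>) (\<psi> \<circ> \<alpha>) \<subseteq> S_coalg H \<phi> \<psi>
     \<and> I_ideal H' (\<phi> \<circ> \<alpha>) (\<psi> \<circ> \<alpha>) = gen_ideal H' (dual_map \<alpha> ` I_ideal H \<phi> \<psi>)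
     \<and> (inj \<alpha> \<longrightarrow> S_coalg H' (\<phi> \<circ> \<alpha>) (\<psi> \<circ> \<alpha>) = \<alpha> -` S_coalg H \<phi> \<psi>
                 \<and> I_ideal H' (\<phi> \<circ> \<alpha>) (\<psi> \<circ> \<alpha>) = dual_map \<alpha> ` I_ideal H \<phi> \<psi>)"
proof -
  interpret gc_hopf_morphism H' H \<alpha>
    using assms(1-3) by (intro gc_hopf_morphism.intro gc_hopf_morphism_axioms.intro gc_hopf.intro)
  have lin: "lin_fun H \<phi>" "lin_fun H \<psi>" using assms(4,5) by (simp_all add: character_def)
  have gens: "H.I_generators \<phi> \<psi> \<subseteq> gdual H" by (rule H.I_generators_gdual[OF lin])
  have I': "I_ideal H' (\<phi> \<circ> \<alpha>) (\<psi> \<circ> \<alpha>) = gen_ideal H' (dual_map \<alpha> ` H.I_generators \<phi> \<psi>)"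
    by (simp add: H'.I_ideal_eq_gen_ideal dual_map_I_generators)
  show ?thesis
    unfolding I' H.I_ideal_eq_gen_ideal
    using S_coalg_image_subset[OF lin] gen_ideal_dual_map_gen_ideal[OF gens]
      S_coalg_vimage[OF _ lin] dual_map_gen_ideal[OF _ gens]
    by simp
qed

end
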